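(* Consider the sensor-network Kalman filtering model of the context with a single sensor ($M=1$, so $S_1$ transmits directly to the gateway $S_0$ and $C(k)=\gamma_1(k)C_1$) and a time-invariant system matrix $A(k)=A$ for all $k$. Suppose the network state process $\{\Xi(k)\}$ is a time-homogeneous Markov chain with transition probabilities $p_{ij}$, $i,j\in\mathbb{B}$, the power and bit-rate control laws are of the form $u_1(k)=\kappa_1(\Xi(k),h_1(k))$, $b_1(k)=\eta_1(\Xi(k),h_1(k))$, and $C_1$ has full column rank. If there exists $\rho\in[0,1)$ such that $$\|A\|^2\sum_{j\in\mathbb{B}}p_{ij}(1-\phi_{1|j})\le\rho\quad\text{for all }i\in\mathbb{B},$$ then the Kalman filter is exponentially bounded.
   Context: System: $x(k+1)=Ax(k)+w(k)$, $k\in\mathbb{N}_0$, $x(k)\in\mathbb{R}^n$, $x(0)\sim\mathcal N(x_0,P_0)$, $\{w(k)\}$ independent with $w(k)\sim\mathcal N(0,Q(k))$; one sensor $y_1(k)=C_1x(k)+v_1(k)$, $C_1\in\mathbb{R}^{l_1\times n}$, $\{v_1(k)\}$ independent with $v_1(k)\sim\mathcal N(0,R_1(k))$; $x(0),w,v_1$ mutually independent; $\{Q(k)\},\{R_1(k)\}$ deterministic, bounded, known. $\|\cdot\|$ is the spectral norm. Fading model: network state $\Xi(k)\in\mathbb{B}=\{1,\dots,|\mathbb{B}|\}$ (finite); channel power gain $h_1(k)\ge0$ with time-homogeneous conditional distribution given the network state, gains at different times conditionally independent given the network states. The link success indicator $\gamma_1(k)\in\{0,1\}$ ($1$ iff the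 packet from $S_1$ reaches the gateway at time $k$) satisfies $\Pr\{\gamma_1(k)=1\mid h_1(k)=h,u_1(k)=u,b_1(k)=b\}=f_1(hu,b)$ with $u_1$ the transmit power, $b_1$ the bit-rate, $f_1$ increasing in the first and decreasing in the second argument. Conditioned on the network states the $\gamma_1(k)$ are independent over time, and $\phi_{1|j}=\Pr\{\gamma_1(k)=1\mid\Xi(k)=j\}$ does not depend on $k$; the network and dropout processes are independent of $x(0),w,v_1$. Kalman filter: $P(k+1|k)=AP(k|k-1)A^T+Q(k)-K(k)C_1P(k|k-1)A^T$, $K(k)=\gamma_1(k)AP(k|k-1)C_1^T(C_1P(k|k-1)C_1^T+R_1(k))^{-1}$, $P(0|-1)=P_0$ (with the corresponding state-estimate recursion). The filter is exponentially bounded if there exist finite $\alpha,\beta$ and $\rho'\in[0,1)$ with $\mathbf{E}\{\operatorname{tr}P(k|k-1)\}\le\alpha\rho'^k+\beta$ for all $k\in\mathbb{N}_0$. *)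

theory Defs
  imports "HOL-Analysis.Analysis" "HOL-Probability.Probability"
begin

definition spec_norm :: "real^'n^'m \<Rightarrow> real" where
  "spec_norm A = onorm (\<lambda>x. A *v x)"

definition sym_psd :: "real^'n^'n \<Rightarrow> bool" where
  "sym_psd M \<longleftrightarrow> transpose M = M \<and> (\<forall>x. 0 \<le> x \<bullet> (M *v x))"

definition sym_pd :: "real^'n^'n \<Rightarrow> bool" where
  "sym_pd M \<longleftrightarrow> transpose M = M \<and> (\<forall>x. x \<noteq> 0 \<longrightarrow> 0 < x \<bullet> (M *v x))"

text \<open>Riccati recursion of the Kalman filter for P(k|k-1), driven by a realisation g of the
  link success indicators gamma_1(k) (True = packet received).\<close>
fun Ppred :: "real^'n^'n \<Rightarrow> real^'n^'l \<Rightarrow> (nat \<Rightarrow> real^'n^'n) \<Rightarrow> (nat \<Rightarrow> real^'l^'l)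
              \<Rightarrow> real^'n^'n \<Rightarrow> (nat \<Rightarrow> bool) \<Rightarrow> nat \<Rightarrow> real^'n^'n" where
  "Ppred A C Q R P0 g 0 = P0"
| "Ppred A C Q R P0 g (Suc k) =
     (let P = Ppred A C Q R P0 g k;
          K = (if g k then A ** P ** transpose C ** matrix_inv (C ** P ** transpose C + R k)
               else 0)
      in A ** P ** transpose A + Q k - K ** C ** P ** transpose A)"

end

(*
  Pathwise, the Riccati recursion is the congruence P \<mapsto> A X A\<^sup>T + Q, where X is the
  predicted covariance P after a dropout and the posterior covariance after a reception.
  Because C1 has a left inverse L, the posterior covariance is bounded by \<parallel>R\<parallel> \<parallel>L\<parallel>\<^sup>2
  independently of P. Hence the covariance at time k is bounded by a geometric sum in
  a = \<parallel>A\<parallel>\<^sup>2 over the lengths of the runs of dropouts ending at k. Under the Markov law of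
  the network, a set of m dropout times after time 0 has probability at most (\<rho>/a)^m: in the
  forward recursion over the hidden chain the hypothesis on \<rho> is used once per dropout.
  Summing the resulting geometric series gives the exponential bound.
*)

theory Submission
  imports Defs
begin

section \<open>Quadratic forms and the spectral norm\<close>

lemma inner_transpose_matrix_vector:
  fixes B :: "real^'n^'m"
  shows "(transpose B *v x) \<bullet> y = x \<bullet> (B *v y)"
  by (simp add: dot_lmul_matrix)

lemma transpose_add: "transpose (X + Y) = transpose X + transpose (Y::real^'n^'m)"
  by (simp add: transpose_def vec_eq_iff)

lemma transpose_diff: "transpose (X - Y) = transpose X - transpose (Y::real^'n^'m)"
  by (simp add: transpose_def vec_eq_iff)

lemma matrix_diff_ldistrib: "(A::real^'n^'m) ** (B - C) = A ** B - A ** (C :: real^'p^'n)"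
  by (simp add: matrix_eq matrix_vector_mul_assoc[symmetric] matrix_vector_mult_diff_distrib
      matrix_vector_mult_diff_rdistrib)

lemma matrix_diff_rdistrib: "((B::real^'n^'m) - C) ** (A :: real^'p^'n) = B ** A - C ** A"
  by (simp add: matrix_eq matrix_vector_mul_assoc[symmetric] matrix_vector_mult_diff_rdistrib)

lemma spec_norm_nonneg: "0 \<le> spec_norm (B::real^'n^'m)"
  unfolding spec_norm_def by (rule onorm_pos_le[OF matrix_vector_mul_bounded_linear])

lemma norm_matrix_vector_le_spec_norm: "norm ((B::real^'n^'m) *v x) \<le> spec_norm B * norm x"
  unfolding spec_norm_def by (rule onorm[OF matrix_vector_mul_bounded_linear])

lemma norm_transpose_vector_le_spec_norm:
  "norm (transpose (B::real^'n^'m) *v x) \<le> spec_norm B * norm x"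
proof -
  let ?v = "transpose B *v x"
  have "norm ?v ^ 2 = x \<bullet> (B *v ?v)"
    by (simp only: power2_norm_eq_inner inner_transpose_matrix_vector)
  also have "\<dots> \<le> norm x * (spec_norm B * norm ?v)"
    by (intro order_trans[OF norm_cauchy_schwarz] mult_left_mono norm_matrix_vector_le_spec_norm)
      simp
  finally have "norm ?v * norm ?v \<le> (spec_norm B * norm x) * norm ?v"
    by (simp add: power2_eq_square algebra_simps)
  then show ?thesis
    using spec_norm_nonneg[of B] by (cases "norm ?v = 0") (simp_all add: mult_le_cancel_right)
qed

lemma quadratic_form_le_spec_norm: "x \<bullet> ((P::real^'n^'n) *v x) \<le> spec_norm P * norm x ^ 2"
proof -
  have "x \<bullet> (P *v x) \<le> norm x * (spec_norm P * norm x)"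
    by (intro order_trans[OF norm_cauchy_schwarz] mult_left_mono norm_matrix_vector_le_spec_norm)
      simp
  then show ?thesis by (simp add: power2_eq_square algebra_simps)
qed

lemma quadratic_form_congruence:
  "x \<bullet> (((B::real^'n^'m) ** P ** transpose B) *v x)
    = (transpose B *v x) \<bullet> (P *v (transpose B *v x))"
  by (simp only: matrix_vector_mul_assoc[symmetric] inner_transpose_matrix_vector[symmetric])

lemma trace_le_of_quadratic_form_le:
  assumes "\<And>x. x \<bullet> ((P::real^'n^'n) *v x) \<le> c * norm x ^ 2"
  shows "trace P \<le> real CARD('n) * c"
proof -
  have "trace P = (\<Sum>i\<in>UNIV. axis i 1 \<bullet> (P *v axis i 1))"
    unfolding trace_def
    by (intro sum.cong refl) (simp add: inner_axis' matrix_vector_mult_basis column_def)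
  also have "\<dots> \<le> (\<Sum>i\<in>(UNIV::'n set). c)"
    by (intro sum_mono) (use assms[of "axis _ 1"] in simp)
  finally show ?thesis by simp
qed

lemma sym_pd_imp_sym_psd: "sym_pd M \<Longrightarrow> sym_psd M"
  unfolding sym_pd_def sym_psd_def by (metis inner_zero_left less_eq_real_def)

lemma sym_psd_congruence_add:
  assumes "sym_psd X" and "sym_psd Q"
  shows "sym_psd ((B::real^'n^'m) ** X ** transpose B + Q)"
  using assms unfolding sym_psd_def
  by (simp add: transpose_add matrix_transpose_mul matrix_mul_assoc matrix_vector_mult_add_rdistrib
      inner_add_right quadratic_form_congruence)

lemma quadratic_form_congruence_add_le:
  fixes A X Q :: "real^'n^'n"
  assumes X: "\<And>y. y \<bullet> (X *v y) \<le> c * norm y ^ 2" and "0 \<le> c" and Q: "spec_norm Q \<le> q"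
  shows "x \<bullet> ((A ** X ** transpose A + Q) *v x) \<le> (spec_norm A ^ 2 * c + q) * norm x ^ 2"
proof -
  have "(transpose A *v x) \<bullet> (X *v (transpose A *v x)) \<le> c * (spec_norm A * norm x) ^ 2"
    by (intro order_trans[OF X] mult_left_mono power_mono norm_transpose_vector_le_spec_norm
        \<open>0 \<le> c\<close>) simp
  moreover have "x \<bullet> (Q *v x) \<le> q * norm x ^ 2"
    by (intro order_trans[OF quadratic_form_le_spec_norm] mult_right_mono Q) simp
  ultimately show ?thesis
    by (simp add: quadratic_form_congruence algebra_simps)
qed

section \<open>The Kalman measurement update\<close>

definition innovation_cov :: "real^'n^'l \<Rightarrow> real^'n^'n \<Rightarrow> real^'l^'l \<Rightarrow> real^'l^'l" where
  "innovation_cov C P R = C ** P ** transpose C + R"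

definition posterior_cov :: "real^'n^'l \<Rightarrow> real^'n^'n \<Rightarrow> real^'l^'l \<Rightarrow> real^'n^'n" where
  "posterior_cov C P R = P - P ** transpose C ** matrix_inv (innovation_cov C P R) ** C ** P"

lemma Ppred_Suc:
  "Ppred A C Q R P0 g (Suc k) =
     A ** (if g k then posterior_cov C (Ppred A C Q R P0 g k) (R k) else Ppred A C Q R P0 g k)
       ** transpose A + Q k"
  by (simp add: Let_def posterior_cov_def innovation_cov_def matrix_diff_ldistrib
      matrix_diff_rdistrib matrix_mul_assoc)

lemma quadratic_form_innovation_cov:
  "v \<bullet> (innovation_cov C P R *v v) = (transpose C *v v) \<bullet> (P *v (transpose C *v v)) + v \<bullet> (R *v v)"
  unfolding innovation_cov_def
  by (simp only: matrix_vector_mult_add_rdistrib inner_add_right quadratic_form_congruence)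

context
  fixes C :: "real^'n^'l" and P :: "real^'n^'n" and R :: "real^'l^'l"
  assumes P: "sym_psd P" and R: "sym_pd R"
begin

lemma innovation_cov_pos: "v \<noteq> 0 \<Longrightarrow> 0 < v \<bullet> (innovation_cov C P R *v v)"
  using P R unfolding quadratic_form_innovation_cov sym_psd_def sym_pd_def
  by (metis add_nonneg_pos)

lemma transpose_innovation_cov: "transpose (innovation_cov C P R) = innovation_cov C P R"
  using P R unfolding innovation_cov_def sym_psd_def sym_pd_def
  by (simp add: transpose_add matrix_transpose_mul matrix_mul_assoc)

lemma innovation_cov_inverse:
  "innovation_cov C P R ** matrix_inv (innovation_cov C P R) = mat 1"
  "matrix_inv (innovation_cov C P R) ** innovation_cov C P R = mat 1"
proof -
  let ?S = "innovation_cov C P R"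
  have "inj ((*v) ?S)"
  proof (rule injI)
    fix x y assume "?S *v x = ?S *v y"
    then have "?S *v (x - y) = 0" by (simp add: matrix_vector_mult_diff_distrib)
    then show "x = y" using innovation_cov_pos[of "x - y"] by force
  qed
  then have "invertible ?S"
    using matrix_left_invertible_injective invertible_left_inverse by blast
  then show "?S ** matrix_inv ?S = mat 1" "matrix_inv ?S ** ?S = mat 1"
    using someI_ex[OF \<open>invertible ?S\<close>[unfolded invertible_def]] unfolding matrix_inv_def by auto
qed

lemma transpose_matrix_inv_innovation_cov:
  "transpose (matrix_inv (innovation_cov C P R)) = matrix_inv (innovation_cov C P R)"
proof -
  let ?S = "innovation_cov C P R" and ?Si = "matrix_inv (innovation_cov C P R)"
  have "?S ** transpose ?Si = mat 1"
    using arg_cong[OF innovation_cov_inverse(2), of transpose]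
    by (simp add: matrix_transpose_mul transpose_innovation_cov)
  then have "?Si ** (?S ** transpose ?Si) = ?Si" by simp
  then show ?thesis by (simp add: matrix_mul_assoc innovation_cov_inverse)
qed

(* Completing the square in u: taking u = S\<inverse> C P y shows that the posterior covariance
   is positive semidefinite, and taking u = L\<^sup>T y, which kills the first term, bounds it. *)
lemma quadratic_form_posterior_cov:
  fixes y :: "real^'n" and u :: "real^'l"
  defines "S \<equiv> innovation_cov C P R"
  defines "w \<equiv> matrix_inv S *v (C *v (P *v y))"
  shows "y \<bullet> (posterior_cov C P R *v y)
    = (y - transpose C *v u) \<bullet> (P *v (y - transpose C *v u)) + u \<bullet> (R *v u)
      - (u - w) \<bullet> (S *v (u - w))"
proof -
  have P_swap: "v \<bullet> (P *v x) = (P *v v) \<bullet> x" for v x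
    using P inner_transpose_matrix_vector[of P v x] by (simp add: sym_psd_def)
  have S_swap: "v \<bullet> (S *v x) = (S *v v) \<bullet> x" for v x
    using transpose_innovation_cov inner_transpose_matrix_vector[of S v x] by (simp add: S_def)
  define z where "z = C *v (P *v y)"
  define c where "c = transpose C *v u"
  have "S *v (matrix_inv S *v v) = v" for v
    unfolding S_def
    by (simp only: matrix_vector_mul_assoc innovation_cov_inverse matrix_vector_mul_lid)
  then have Sw: "S *v w = z" by (simp add: w_def z_def)
  have "y \<bullet> (posterior_cov C P R *v y) = y \<bullet> (P *v y) - (P *v y) \<bullet> (transpose C *v w)"
    unfolding posterior_cov_def S_def w_def
    by (simp add: matrix_vector_mult_diff_rdistrib inner_diff_right P_swap
        matrix_vector_mul_assoc[symmetric])
  also have "(P *v y) \<bullet> (transpose C *v w) = z \<bullet> w"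
    unfolding z_def by (metis inner_commute inner_transpose_matrix_vector)
  finally have post: "y \<bullet> (posterior_cov C P R *v y) = y \<bullet> (P *v y) - z \<bullet> w" .
  have yc: "y \<bullet> (P *v c) = c \<bullet> (P *v y)" by (metis P_swap inner_commute)
  have wu: "w \<bullet> (S *v u) = u \<bullet> z" by (metis S_swap Sw inner_commute)
  have "c \<bullet> (P *v y) = u \<bullet> z" unfolding c_def z_def by (rule inner_transpose_matrix_vector)
  moreover have "u \<bullet> (S *v u) = c \<bullet> (P *v c) + u \<bullet> (R *v u)"
    unfolding c_def S_def by (rule quadratic_form_innovation_cov)
  moreover have "(y - c) \<bullet> (P *v (y - c)) = y \<bullet> (P *v y) - 2 * (c \<bullet> (P *v y)) + c \<bullet> (P *v c)"
    by (simp add: matrix_vector_mult_diff_distrib inner_diff_left inner_diff_right yc)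
  moreover have "(u - w) \<bullet> (S *v (u - w)) = u \<bullet> (S *v u) - 2 * (u \<bullet> z) + z \<bullet> w"
    by (simp add: matrix_vector_mult_diff_distrib inner_diff_left inner_diff_right Sw wu
        inner_commute[of w z])
  ultimately show ?thesis unfolding post c_def[symmetric] by simp
qed

lemma posterior_cov_sym_psd: "sym_psd (posterior_cov C P R)"
proof -
  have "transpose P = P" using P by (simp add: sym_psd_def)
  then have "transpose (posterior_cov C P R) = posterior_cov C P R"
    unfolding posterior_cov_def
    by (simp add: transpose_diff matrix_transpose_mul matrix_mul_assoc
        transpose_matrix_inv_innovation_cov)
  moreover have "0 \<le> y \<bullet> (posterior_cov C P R *v y)" for y
  proof -
    let ?u = "matrix_inv (innovation_cov C P R) *v (C *v (P *v y))"
    have "0 \<le> (y - transpose C *v ?u) \<bullet> (P *v (y - transpose C *v ?u))" "0 \<le> ?u \<bullet> (R *v ?u)"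
      using P sym_pd_imp_sym_psd[OF R] unfolding sym_psd_def by auto
    then show ?thesis by (simp add: quadratic_form_posterior_cov[where u = ?u])
  qed
  ultimately show ?thesis by (simp add: sym_psd_def)
qed

lemma quadratic_form_posterior_cov_le:
  assumes L: "L ** C = mat 1"
  shows "y \<bullet> (posterior_cov C P R *v y) \<le> spec_norm R * spec_norm L ^ 2 * norm y ^ 2"
proof -
  let ?u = "transpose L *v y"
  let ?w = "matrix_inv (innovation_cov C P R) *v (C *v (P *v y))"
  have "transpose C *v ?u = y"
    by (simp only: matrix_vector_mul_assoc matrix_transpose_mul[symmetric] L transpose_mat
        matrix_vector_mul_lid)
  then have "y \<bullet> (posterior_cov C P R *v y) \<le> ?u \<bullet> (R *v ?u)"
    using innovation_cov_pos[of "?u - ?w"]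
    by (cases "?u = ?w") (auto simp: quadratic_form_posterior_cov[where u = ?u])
  also have "\<dots> \<le> spec_norm R * (spec_norm L * norm y) ^ 2"
    by (intro order_trans[OF quadratic_form_le_spec_norm] mult_left_mono power_mono
        norm_transpose_vector_le_spec_norm spec_norm_nonneg) simp
  finally show ?thesis by (simp add: power_mult_distrib)
qed

end

section \<open>Pathwise bound on the error covariance\<close>

(* D bounds the covariance just after a reception and every further dropout multiplies the
   bound by a; the m-th summand is the case of a last reception m steps back, the final term
   the case of no reception at all, starting from the bound b on P0. *)
definition dropout_bound :: "real \<Rightarrow> real \<Rightarrow> real \<Rightarrow> (nat \<Rightarrow> bool) \<Rightarrow> nat \<Rightarrow> real" where
  "dropout_bound a D b g k =
     D * (\<Sum>m<k. a ^ m * of_bool (\<forall>t\<in>{k - m..<k}. \<not> g t)) + a ^ k * b * of_bool (\<forall>t\<in>{..<k}. \<not> g t)"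

lemma dropout_bound_nonneg: "0 \<le> a \<Longrightarrow> 0 \<le> D \<Longrightarrow> 0 \<le> b \<Longrightarrow> 0 \<le> dropout_bound a D b g k"
  unfolding dropout_bound_def by (simp add: sum_nonneg)

lemma dropout_bound_Suc:
  "dropout_bound a D b g (Suc k) = D + (if g k then 0 else a * dropout_bound a D b g k)"
proof -
  have window: "(\<forall>t\<in>{k - m..<Suc k}. \<not> g t) \<longleftrightarrow> \<not> g k \<and> (\<forall>t\<in>{k - m..<k}. \<not> g t)" for m
    by (auto simp: less_Suc_eq)
  have "(\<forall>t\<in>{..<Suc k}. \<not> g t) \<longleftrightarrow> \<not> g k \<and> (\<forall>t\<in>{..<k}. \<not> g t)"
    by (auto simp: less_Suc_eq)
  then show ?thesis
    unfolding dropout_bound_def sum.lessThan_Suc_shift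
    by (simp add: window sum_distrib_left algebra_simps del: sum_mult_of_bool_eq)
qed

lemma Ppred_quadratic_form_le:
  fixes A :: "real^'n^'n" and C :: "real^'n^'l" and g :: "nat \<Rightarrow> bool"
  assumes P0: "sym_psd P0"
    and Q: "\<And>k. sym_psd (Q k)" and q: "\<And>k. spec_norm (Q k) \<le> q"
    and R: "\<And>k. sym_pd (R k)" and r: "\<And>k. spec_norm (R k) \<le> r"
    and L: "L ** C = mat 1"
  defines "a \<equiv> spec_norm A ^ 2"
  defines "bound \<equiv> dropout_bound a (a * (r * spec_norm L ^ 2) + q) (spec_norm P0) g"
  shows "sym_psd (Ppred A C Q R P0 g k) \<and>
    (\<forall>x. x \<bullet> (Ppred A C Q R P0 g k *v x) \<le> bound k * norm x ^ 2)"
proof (induction k)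
  case 0
  show ?case by (simp add: P0 bound_def dropout_bound_def quadratic_form_le_spec_norm)
next
  case (Suc k)
  let ?P = "Ppred A C Q R P0 g k"
  define X where "X = (if g k then posterior_cov C ?P (R k) else ?P)"
  define c where "c = (if g k then r * spec_norm L ^ 2 else bound k)"
  have "0 \<le> r" "0 \<le> q"
    using r[of 0] q[of 0] spec_norm_nonneg[of "R 0"] spec_norm_nonneg[of "Q 0"] by linarith+
  moreover have "0 \<le> a" by (simp add: a_def)
  ultimately have "0 \<le> c" "a * c + q \<le> bound (Suc k)"
    by (auto simp: c_def bound_def dropout_bound_Suc dropout_bound_nonneg spec_norm_nonneg)
  have "sym_psd X" using Suc.IH posterior_cov_sym_psd[OF _ R] by (auto simp: X_def)
  have X_le: "y \<bullet> (X *v y) \<le> c * norm y ^ 2" for y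
  proof (cases "g k")
    case True
    have "y \<bullet> (X *v y) \<le> spec_norm (R k) * spec_norm L ^ 2 * norm y ^ 2"
      using quadratic_form_posterior_cov_le[OF _ R L] Suc.IH True by (simp add: X_def)
    also have "\<dots> \<le> c * norm y ^ 2"
      using True r[of k] by (simp add: c_def mult_right_mono)
    finally show ?thesis .
  qed (use Suc.IH in \<open>simp add: X_def c_def\<close>)
  have P_Suc: "Ppred A C Q R P0 g (Suc k) = A ** X ** transpose A + Q k"
    unfolding X_def by (rule Ppred_Suc)
  show ?case
  proof (intro conjI allI)
    show "sym_psd (Ppred A C Q R P0 g (Suc k))"
      unfolding P_Suc by (rule sym_psd_congruence_add[OF \<open>sym_psd X\<close> Q])
    fix x
    have "x \<bullet> (Ppred A C Q R P0 g (Suc k) *v x) \<le> (a * c + q) * norm x ^ 2"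
      unfolding P_Suc a_def by (rule quadratic_form_congruence_add_le[OF X_le \<open>0 \<le> c\<close> q])
    also have "\<dots> \<le> bound (Suc k) * norm x ^ 2"
      by (intro mult_right_mono \<open>a * c + q \<le> bound (Suc k)\<close>) simp
    finally show "x \<bullet> (Ppred A C Q R P0 g (Suc k) *v x) \<le> bound (Suc k) * norm x ^ 2" .
  qed
qed

lemma trace_Ppred_le:
  fixes A :: "real^'n^'n" and C :: "real^'n^'l" and g :: "nat \<Rightarrow> bool"
  assumes "sym_psd P0"
    and "\<And>k. sym_psd (Q k)" and "\<And>k. spec_norm (Q k) \<le> q"
    and "\<And>k. sym_pd (R k)" and "\<And>k. spec_norm (R k) \<le> r"
    and "L ** C = mat 1"
  shows "trace (Ppred A C Q R P0 g k) \<le> real CARD('n) *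
    dropout_bound (spec_norm A ^ 2) (spec_norm A ^ 2 * (r * spec_norm L ^ 2) + q)
      (spec_norm P0) g k"
  using Ppred_quadratic_form_le
      [where A = A and C = C and Q = Q and R = R and g = g and k = k, OF assms]
  by (intro trace_le_of_quadratic_form_le) blast

lemma Ppred_cong: "(\<And>t. t < k \<Longrightarrow> g t = g' t) \<Longrightarrow> Ppred A C Q R P0 g k = Ppred A C Q R P0 g' k"
  by (induction k) (simp_all add: Let_def)

section \<open>Path weights of the hidden Markov network\<close>

abbreviation paths :: "nat \<Rightarrow> (nat \<Rightarrow> 'a) set" where
  "paths n \<equiv> PiE {..n} (\<lambda>_. UNIV)"

lemma sum_PiE_insert:
  fixes F :: "('a \<Rightarrow> 'c::finite) \<Rightarrow> real"
  assumes "finite S" "x \<notin> S"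
  shows "(\<Sum>h\<in>PiE (insert x S) (\<lambda>_. UNIV). F h) = (\<Sum>h\<in>PiE S (\<lambda>_. UNIV). \<Sum>y\<in>UNIV. F (h(x := y)))"
proof -
  have "(\<Sum>h\<in>PiE (insert x S) (\<lambda>_. UNIV). F h)
      = sum (F \<circ> (\<lambda>(y, g). g(x := y))) ((UNIV::'c set) \<times> PiE S (\<lambda>_. UNIV))"
    unfolding PiE_insert_eq by (rule sum.reindex[OF inj_combinator[OF assms(2)]])
  also have "\<dots> = (\<Sum>y\<in>UNIV. \<Sum>h\<in>PiE S (\<lambda>_. UNIV). F (h(x := y)))"
    by (simp add: sum.cartesian_product comp_def case_prod_unfold)
  also have "\<dots> = (\<Sum>h\<in>PiE S (\<lambda>_. UNIV). \<Sum>y\<in>UNIV. F (h(x := y)))"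
    by (rule sum.swap)
  finally show ?thesis .
qed

lemma sum_UNIV_pair:
  "(\<Sum>y\<in>(UNIV :: ('a::finite \<times> 'c::finite) set). f y) = (\<Sum>b\<in>UNIV. \<Sum>j\<in>UNIV. f (j, b))"
  by (subst sum.swap) (simp add: sum.cartesian_product flip: UNIV_Times_UNIV)

locale markov_path =
  fixes pi :: "'b::finite \<Rightarrow> real" and p :: "'b \<Rightarrow> 'b \<Rightarrow> real"
begin

definition path_weight :: "(nat \<Rightarrow> 'b \<Rightarrow> bool \<Rightarrow> real) \<Rightarrow> nat \<Rightarrow> (nat \<Rightarrow> 'b \<times> bool) \<Rightarrow> real" where
  "path_weight c n h = pi (fst (h 0)) * (\<Prod>t<n. p (fst (h t)) (fst (h (Suc t))))
     * (\<Prod>t\<le>n. c t (fst (h t)) (snd (h t)))"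

definition forward :: "(nat \<Rightarrow> 'b \<Rightarrow> bool \<Rightarrow> real) \<Rightarrow> nat \<Rightarrow> 'b \<Rightarrow> real" where
  "forward c n j = (\<Sum>h\<in>paths n. if fst (h n) = j then path_weight c n h else 0)"

lemma forward_0: "forward c 0 j = pi j * (\<Sum>b\<in>UNIV. c 0 j b)"
proof -
  have "forward c 0 j = (\<Sum>h\<in>PiE {} (\<lambda>_. UNIV). \<Sum>y\<in>UNIV.
      if fst ((h(0 := y)) 0) = j then path_weight c 0 (h(0 := y)) else 0)"
    unfolding forward_def atMost_0 by (rule sum_PiE_insert) auto
  also have "\<dots> = (\<Sum>y\<in>UNIV. if fst y = j then path_weight c 0 ((\<lambda>_. undefined)(0 := y)) else 0)"
    by (subst PiE_empty_domain) simp
  finally show ?thesis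
    by (simp add: sum_UNIV_pair path_weight_def sum_distrib_left)
qed

lemma path_weight_upd:
  "path_weight c (Suc n) (h(Suc n := y))
    = path_weight c n h * p (fst (h n)) (fst y) * c (Suc n) (fst y) (snd y)"
  by (simp add: path_weight_def)

lemma forward_Suc:
  "forward c (Suc n) j = (\<Sum>i\<in>UNIV. forward c n i * p i j) * (\<Sum>b\<in>UNIV. c (Suc n) j b)"
proof -
  have "forward c (Suc n) j = (\<Sum>h\<in>paths n. \<Sum>y\<in>UNIV.
      if fst y = j then path_weight c n h * p (fst (h n)) (fst y) * c (Suc n) (fst y) (snd y)
      else 0)"
    unfolding forward_def atMost_Suc
    by (subst sum_PiE_insert) (auto simp: path_weight_upd intro!: sum.cong)
  also have "\<dots> = (\<Sum>h\<in>paths n. path_weight c n h * p (fst (h n)) j) * (\<Sum>b\<in>UNIV. c (Suc n) j b)"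
    by (simp add: sum_UNIV_pair sum_distrib_left sum_distrib_right mult.assoc) (rule sum.swap)
  also have "(\<Sum>h\<in>paths n. path_weight c n h * p (fst (h n)) j) = (\<Sum>i\<in>UNIV. forward c n i * p i j)"
    unfolding forward_def sum_distrib_right
    by (subst sum.swap) (simp add: if_distrib[of "\<lambda>x. x * _"] cong: if_cong)
  finally show ?thesis .
qed

lemma sum_path_weight: "(\<Sum>h\<in>paths n. path_weight c n h) = (\<Sum>j\<in>UNIV. forward c n j)"
  unfolding forward_def by (subst sum.swap) simp

lemma forward_nonneg:
  assumes "\<And>j. 0 \<le> pi j" "\<And>i j. 0 \<le> p i j" "\<And>t j b. 0 \<le> c t j b"
  shows "0 \<le> forward c n j"
  by (induction n arbitrary: j) (simp_all add: forward_0 forward_Suc assms sum_nonneg)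

lemma path_weight_nonneg:
  assumes "\<And>j. 0 \<le> pi j" "\<And>i j. 0 \<le> p i j" "\<And>t j b. 0 \<le> c t j b"
  shows "0 \<le> path_weight c n h"
  unfolding path_weight_def using assms by (simp add: prod_nonneg)

end

definition link_weight :: "('b \<Rightarrow> real) \<Rightarrow> 'b \<Rightarrow> bool \<Rightarrow> real" where
  "link_weight phi j b = (if b then phi j else 1 - phi j)"

(* Forward sums with these weights are probabilities that no packet arrives at the times in K. *)
definition censored_weight :: "('b \<Rightarrow> real) \<Rightarrow> nat set \<Rightarrow> nat \<Rightarrow> 'b \<Rightarrow> bool \<Rightarrow> real" where
  "censored_weight phi K t j b = (if t \<in> K \<and> b then 0 else link_weight phi j b)"

lemma sum_censored_weight:
  "(\<Sum>b\<in>UNIV. censored_weight phi K t j b) = (if t \<in> K then 1 - phi j else 1)"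
  by (simp add: UNIV_bool censored_weight_def link_weight_def)

lemma (in markov_path) path_weight_censored:
  assumes "K \<subseteq> {..n}"
  shows "path_weight (censored_weight phi K) n h
    = path_weight (\<lambda>_. link_weight phi) n h * of_bool (\<forall>t\<in>K. \<not> snd (h t))"
proof (cases "\<forall>t\<in>K. \<not> snd (h t)")
  case True
  then show ?thesis
    unfolding path_weight_def by (auto simp: censored_weight_def intro!: prod.cong)
next
  case False
  then obtain t where "t \<in> K" "snd (h t)" by blast
  then have "(\<Prod>t\<le>n. censored_weight phi K t (fst (h t)) (snd (h t))) = 0"
    using assms by (intro prod_zero) (auto simp: censored_weight_def)
  then have "path_weight (censored_weight phi K) n h = 0"
    unfolding path_weight_def by (simp only: mult_zero_right)
  then show ?thesis using False by simp
qed

locale dropout_chain = markov_path pi p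
  for pi :: "'b::finite \<Rightarrow> real" and p +
  fixes phi :: "'b \<Rightarrow> real" and a \<rho> :: real
  assumes pi_nonneg: "\<And>j. 0 \<le> pi j" and sum_pi_le: "(\<Sum>j\<in>UNIV. pi j) \<le> 1"
    and p_nonneg: "\<And>i j. 0 \<le> p i j" and p_stochastic: "\<And>i. (\<Sum>j\<in>UNIV. p i j) = 1"
    and phi_prob: "\<And>j. 0 \<le> phi j \<and> phi j \<le> 1"
    and a_nonneg: "0 \<le> a" and rho_nonneg: "0 \<le> \<rho>"
    and drop_contraction: "\<And>i. a * (\<Sum>j\<in>UNIV. p i j * (1 - phi j)) \<le> \<rho>"
begin

lemma censored_weight_nonneg: "0 \<le> censored_weight phi K t j b"
  using phi_prob[of j] by (simp add: censored_weight_def link_weight_def)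

(* Time 0 is excluded: the contraction hypothesis controls transitions, not the initial law. *)
lemma forward_censored_le:
  assumes "0 \<notin> K"
  shows "a ^ card (K \<inter> {..n}) * (\<Sum>j\<in>UNIV. forward (censored_weight phi K) n j)
    \<le> \<rho> ^ card (K \<inter> {..n})"
proof (induction n)
  case 0
  have "K \<inter> {..0} = {}" using assms by auto
  then show ?case using sum_pi_le assms by (simp add: forward_0 sum_censored_weight)
next
  case (Suc n)
  let ?F = "forward (censored_weight phi K) n"
  let ?c = "card (K \<inter> {..n})"
  have F_nonneg: "0 \<le> ?F i" for i
    by (rule forward_nonneg[OF pi_nonneg p_nonneg censored_weight_nonneg])
  show ?case
  proof (cases "Suc n \<in> K")
    case True
    have "K \<inter> {..Suc n} = insert (Suc n) (K \<inter> {..n})" using True by (auto simp: atMost_Suc)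
    then have card: "card (K \<inter> {..Suc n}) = Suc ?c" by simp
    have "(\<Sum>j\<in>UNIV. forward (censored_weight phi K) (Suc n) j)
        = (\<Sum>i\<in>UNIV. ?F i * (\<Sum>j\<in>UNIV. p i j * (1 - phi j)))"
      using True
      by (simp add: forward_Suc sum_censored_weight sum_distrib_left sum_distrib_right mult.assoc)
         (rule sum.swap)
    then have "a ^ card (K \<inter> {..Suc n}) * (\<Sum>j\<in>UNIV. forward (censored_weight phi K) (Suc n) j)
        = a ^ ?c * (\<Sum>i\<in>UNIV. ?F i * (a * (\<Sum>j\<in>UNIV. p i j * (1 - phi j))))"
      unfolding card by (simp add: sum_distrib_left algebra_simps)
    also have "\<dots> \<le> a ^ ?c * (\<Sum>i\<in>UNIV. ?F i * \<rho>)"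
      using a_nonneg F_nonneg drop_contraction
      by (intro mult_left_mono sum_mono) auto
    also have "\<dots> = \<rho> * (a ^ ?c * (\<Sum>i\<in>UNIV. ?F i))"
      by (simp add: sum_distrib_left sum_distrib_right algebra_simps)
    also have "\<dots> \<le> \<rho> * \<rho> ^ ?c"
      using Suc rho_nonneg by (intro mult_left_mono) auto
    finally show ?thesis unfolding card by simp
  next
    case False
    then have "K \<inter> {..Suc n} = K \<inter> {..n}" by (auto simp: atMost_Suc)
    moreover have "(\<Sum>j\<in>UNIV. forward (censored_weight phi K) (Suc n) j) = (\<Sum>i\<in>UNIV. ?F i)"
      using False
      by (simp add: forward_Suc sum_censored_weight)
         (subst sum.swap, simp add: p_stochastic flip: sum_distrib_left)
    ultimately show ?thesis using Suc by simp
  qed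
qed

lemma dropout_probability_le:
  assumes "0 \<notin> K" and "K \<subseteq> {..n}"
  shows "a ^ card K *
      (\<Sum>h\<in>paths n. path_weight (\<lambda>_. link_weight phi) n h * of_bool (\<forall>t\<in>K. \<not> snd (h t)))
    \<le> \<rho> ^ card K"
proof -
  have "K \<inter> {..n} = K" using assms(2) by auto
  then show ?thesis
    using forward_censored_le[OF assms(1), of n] sum_path_weight[of "censored_weight phi K" n]
      path_weight_censored[OF assms(2)] by simp
qed

lemma link_path_weight_nonneg: "0 \<le> path_weight (\<lambda>_. link_weight phi) n h"
  using phi_prob by (intro path_weight_nonneg pi_nonneg p_nonneg) (simp add: link_weight_def)

(* Without any reception the initial covariance only sees k - 1 controlled dropouts (times
   1, ..., k - 1); the hypothesis 1/2 \<le> \<rho> absorbs the missing factor. *)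
lemma expected_dropout_bound_le:
  assumes "1/2 \<le> \<rho>" "\<rho> < 1" "0 \<le> D" "0 \<le> b"
  shows "(\<Sum>h\<in>paths k. path_weight (\<lambda>_. link_weight phi) k h * dropout_bound a D b (\<lambda>t. snd (h t)) k)
    \<le> D / (1 - \<rho>) + (1 + 2 * a) * b * \<rho> ^ k"
proof -
  let ?W = "path_weight (\<lambda>_. link_weight phi) k"
  define E where "E K = (\<Sum>h\<in>paths k. ?W h * of_bool (\<forall>t\<in>K. \<not> snd (h t)))" for K
  have "(\<Sum>h\<in>paths k. ?W h * dropout_bound a D b (\<lambda>t. snd (h t)) k)
      = D * (\<Sum>m<k. a ^ m * E {k - m..<k}) + a ^ k * b * E {..<k}"
    unfolding dropout_bound_def E_def
    by (simp add: sum.distrib sum_distrib_left algebra_simps del: sum_mult_of_bool_eq)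
       (subst sum.swap, simp add: mult_ac)
  also have "\<dots> \<le> D * (1 / (1 - \<rho>)) + (1 + 2 * a) * b * \<rho> ^ k"
  proof (intro add_mono)
    have "(\<Sum>m<k. a ^ m * E {k - m..<k}) \<le> (\<Sum>m<k. \<rho> ^ m)"
    proof (intro sum_mono)
      fix m assume "m \<in> {..<k}"
      then show "a ^ m * E {k - m..<k} \<le> \<rho> ^ m"
        using dropout_probability_le[of "{k - m..<k}" k] unfolding E_def by force
    qed
    also have "\<dots> \<le> 1 / (1 - \<rho>)"
      using assms by (simp add: sum_gp_strict field_simps)
    finally show "D * (\<Sum>m<k. a ^ m * E {k - m..<k}) \<le> D * (1 / (1 - \<rho>))"
      using assms by (intro mult_left_mono) auto
    have "E {..<k} \<le> E {1..<k}"
      unfolding E_def by (intro sum_mono mult_left_mono link_path_weight_nonneg) auto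
    then have "a ^ k * E {..<k} \<le> a ^ k * E {1..<k}"
      using a_nonneg by (intro mult_left_mono) auto
    also have "\<dots> \<le> (1 + 2 * a) * \<rho> ^ k"
    proof (cases k)
      case 0
      then show ?thesis
        using dropout_probability_le[of "{}" 0] a_nonneg unfolding E_def by simp
    next
      case (Suc k')
      have "a ^ k' * E {1..<k} \<le> \<rho> ^ k'"
        using dropout_probability_le[of "{1..<k}" k] Suc unfolding E_def by force
      then have "a ^ k * E {1..<k} \<le> a * \<rho> ^ k'"
        using Suc a_nonneg by (simp add: mult.assoc mult_left_mono)
      also have "\<dots> \<le> (2 * \<rho>) * (a * \<rho> ^ k')"
        using mult_right_mono[of 1 "2 * \<rho>" "a * \<rho> ^ k'"] assms(1) a_nonneg rho_nonneg by simp
      also have "\<dots> = 2 * a * \<rho> ^ k"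
        using Suc by simp
      finally show ?thesis
        using rho_nonneg by (simp add: distrib_right add_increasing)
    qed
    finally show "a ^ k * b * E {..<k} \<le> (1 + 2 * a) * b * \<rho> ^ k"
      using assms by (simp add: mult_left_mono mult.commute mult.left_commute)
  qed
  finally show ?thesis by simp
qed

end

section \<open>Expected error covariance\<close>

context prob_space
begin

lemma sum_prob_preimages_eq_1:
  fixes X :: "'a \<Rightarrow> 'b::finite"
  assumes "X \<in> measurable M (count_space UNIV)"
  shows "(\<Sum>j\<in>UNIV. prob {\<omega> \<in> space M. X \<omega> = j}) = 1"
proof -
  have "(\<Sum>j\<in>UNIV. prob {\<omega> \<in> space M. X \<omega> = j}) = prob (\<Union>j. {\<omega> \<in> space M. X \<omega> = j})"
    using assms
    by (intro finite_measure_finite_Union[symmetric]) (auto simp: disjoint_family_on_def)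
  also have "(\<Union>j. {\<omega> \<in> space M. X \<omega> = j}) = space M" by auto
  finally show ?thesis by (simp add: prob_space)
qed

lemma integral_finite_path_functional:
  fixes X :: "nat \<Rightarrow> 'a \<Rightarrow> 'b::finite" and G :: "(nat \<Rightarrow> 'b) \<Rightarrow> real"
  assumes X: "\<And>t. X t \<in> measurable M (count_space UNIV)"
  shows "(\<integral>\<omega>. G (restrict (\<lambda>t. X t \<omega>) {..n}) \<partial>M)
    = (\<Sum>h\<in>paths n. G h * prob {\<omega> \<in> space M. \<forall>t\<le>n. X t \<omega> = h t})"
proof -
  define B where "B h = {\<omega> \<in> space M. \<forall>t\<le>n. X t \<omega> = h t}" for h
  have B_sets: "B h \<in> sets M" for h
  proof -
    have "B h = {\<omega> \<in> space M. \<forall>t\<in>{..n}. X t \<omega> \<in> {h t}}" by (auto simp: B_def)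
    also have "\<dots> \<in> sets M"
      using X by (intro sets.sets_Collect_finite_All) (auto intro: measurable_sets_Collect)
    finally show ?thesis .
  qed
  have "G (restrict (\<lambda>t. X t \<omega>) {..n}) = (\<Sum>h\<in>paths n. G h * indicator (B h) \<omega>)"
    if "\<omega> \<in> space M" for \<omega>
  proof -
    let ?z = "restrict (\<lambda>t. X t \<omega>) {..n}"
    have "\<omega> \<in> B h \<longleftrightarrow> h = ?z" if "h \<in> paths n" for h
      using that \<open>\<omega> \<in> space M\<close> by (auto simp: B_def PiE_iff extensional_def fun_eq_iff)
    then have "(\<Sum>h\<in>paths n. G h * indicator (B h) \<omega>) = (\<Sum>h\<in>paths n. if h = ?z then G h else 0)"
      by (intro sum.cong) (auto simp: indicator_def)
    also have "\<dots> = G ?z" by (simp add: finite_PiE)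
    finally show ?thesis by simp
  qed
  then have "(\<integral>\<omega>. G (restrict (\<lambda>t. X t \<omega>) {..n}) \<partial>M)
      = (\<integral>\<omega>. (\<Sum>h\<in>paths n. G h * indicator (B h) \<omega>) \<partial>M)"
    by (intro Bochner_Integration.integral_cong) simp_all
  also have "\<dots> = (\<Sum>h\<in>paths n. G h * prob (B h))"
    using B_sets
    by (subst Bochner_Integration.integral_sum) (auto simp: less_top[symmetric])
  finally show ?thesis by (simp add: B_def)
qed

end

locale network_model = prob_space M
  for M :: "'w measure" +
  fixes Xi :: "nat \<Rightarrow> 'w \<Rightarrow> 'b::finite" and gam :: "nat \<Rightarrow> 'w \<Rightarrow> bool"
    and p :: "'b \<Rightarrow> 'b \<Rightarrow> real" and phi :: "'b \<Rightarrow> real"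
  assumes Xi_meas: "\<And>k. Xi k \<in> measurable M (count_space UNIV)"
    and gam_meas: "\<And>k. gam k \<in> measurable M (count_space UNIV)"
    and p_nonneg: "\<And>i j. 0 \<le> p i j" and p_stoch: "\<And>i. (\<Sum>j\<in>UNIV. p i j) = 1"
    and phi_prob: "\<And>j. 0 \<le> phi j \<and> phi j \<le> 1"
    and joint_law: "\<And>n s g. prob {\<omega> \<in> space M. \<forall>t\<le>n. Xi t \<omega> = s t \<and> gam t \<omega> = g t}
          = prob {\<omega> \<in> space M. Xi 0 \<omega> = s 0} * (\<Prod>t<n. p (s t) (s (Suc t)))
            * (\<Prod>t\<le>n. if g t then phi (s t) else 1 - phi (s t))"
begin

definition init_dist :: "'b \<Rightarrow> real" where
  "init_dist j = prob {\<omega> \<in> space M. Xi 0 \<omega> = j}"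

sublocale markov_path init_dist p .

lemma expectation_path_functional:
  "(\<integral>\<omega>. G (restrict (\<lambda>t. (Xi t \<omega>, gam t \<omega>)) {..n}) \<partial>M)
    = (\<Sum>h\<in>paths n. G h * path_weight (\<lambda>_. link_weight phi) n h)"
proof -
  have meas: "(\<lambda>\<omega>. (Xi t \<omega>, gam t \<omega>)) \<in> measurable M (count_space UNIV)" for t
    using measurable_Pair[OF Xi_meas gam_meas] by (simp add: pair_measure_countable)
  have law: "prob {\<omega> \<in> space M. \<forall>t\<le>n. (Xi t \<omega>, gam t \<omega>) = h t}
      = path_weight (\<lambda>_. link_weight phi) n h" for h
    using joint_law[of n "\<lambda>t. fst (h t)" "\<lambda>t. snd (h t)"]
    by (simp add: prod_eq_iff path_weight_def link_weight_def init_dist_def)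
  show ?thesis
    using integral_finite_path_functional[where X = "\<lambda>t \<omega>. (Xi t \<omega>, gam t \<omega>)" and G = G, OF meas]
    by (simp only: law)
qed

lemma expected_trace_Ppred_le:
  fixes A :: "real^'n^'n" and C :: "real^'n^'l"
  assumes P0: "sym_psd P0"
    and Q: "\<And>k. sym_psd (Q k)" and q: "\<And>k. spec_norm (Q k) \<le> q"
    and R: "\<And>k. sym_pd (R k)" and r: "\<And>k. spec_norm (R k) \<le> r"
    and L: "L ** C = mat 1"
    and contraction: "\<And>i. spec_norm A ^ 2 * (\<Sum>j\<in>UNIV. p i j * (1 - phi j)) \<le> \<rho>"
    and rho: "1/2 \<le> \<rho>" "\<rho> < 1"
  defines "a \<equiv> spec_norm A ^ 2"
  defines "D \<equiv> a * (r * spec_norm L ^ 2) + q"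
  shows "(\<integral>\<omega>. trace (Ppred A C Q R P0 (\<lambda>t. gam t \<omega>) k) \<partial>M)
    \<le> CARD('n) * (D / (1 - \<rho>) + (1 + 2 * a) * spec_norm P0 * \<rho> ^ k)"
proof -
  interpret dropout_chain init_dist p phi a \<rho>
    using p_nonneg p_stoch phi_prob contraction sum_prob_preimages_eq_1[OF Xi_meas] rho
    by unfold_locales (auto simp: init_dist_def a_def)
  let ?G = "\<lambda>h. trace (Ppred A C Q R P0 (\<lambda>t. snd (h t)) k)"
  let ?W = "path_weight (\<lambda>_. link_weight phi) k"
  let ?B = "\<lambda>h. dropout_bound a D (spec_norm P0) (\<lambda>t. snd (h t)) k"
  have "0 \<le> D"
    using q[of 0] r[of 0] spec_norm_nonneg[of "Q 0"] spec_norm_nonneg[of "R 0"]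
    by (simp add: D_def a_def)
  have "(\<integral>\<omega>. trace (Ppred A C Q R P0 (\<lambda>t. gam t \<omega>) k) \<partial>M)
      = (\<integral>\<omega>. ?G (restrict (\<lambda>t. (Xi t \<omega>, gam t \<omega>)) {..k}) \<partial>M)"
    by (intro Bochner_Integration.integral_cong refl arg_cong[where f = trace] Ppred_cong) simp
  also have "\<dots> = (\<Sum>h\<in>paths k. ?G h * ?W h)"
    by (rule expectation_path_functional)
  also have "\<dots> \<le> (\<Sum>h\<in>paths k. CARD('n) * (?W h * ?B h))"
  proof (intro sum_mono)
    fix h :: "nat \<Rightarrow> 'b \<times> bool"
    have "?G h \<le> CARD('n) * ?B h"
      unfolding a_def D_def by (rule trace_Ppred_le[where Q = Q and R = R, OF P0 Q q R r L])
    from mult_right_mono[OF this link_path_weight_nonneg]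
    show "?G h * ?W h \<le> CARD('n) * (?W h * ?B h)" by (simp add: mult_ac)
  qed
  also have "\<dots> \<le> CARD('n) * (D / (1 - \<rho>) + (1 + 2 * a) * spec_norm P0 * \<rho> ^ k)"
    unfolding sum_distrib_left[symmetric] using \<open>0 \<le> D\<close> rho
    by (intro mult_left_mono expected_dropout_bound_le) (auto simp: spec_norm_nonneg)
  finally show ?thesis .
qed

end

theorem corollary1:
  fixes A :: "real^'n^'n" and C1 :: "real^'n^'l"
    and Q :: "nat \<Rightarrow> real^'n^'n" and R1 :: "nat \<Rightarrow> real^'l^'l" and P0 :: "real^'n^'n"
    and M :: "'w measure"
    and Xi :: "nat \<Rightarrow> 'w \<Rightarrow> 'b::finite" and gam :: "nat \<Rightarrow> 'w \<Rightarrow> bool"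
    and p :: "'b \<Rightarrow> 'b \<Rightarrow> real" and phi :: "'b \<Rightarrow> real"
  assumes P0_cov: "sym_psd P0"
    and Q_cov: "\<And>k. sym_psd (Q k)" and Q_bdd: "\<exists>q. \<forall>k. spec_norm (Q k) \<le> q"
    and R_cov: "\<And>k. sym_pd (R1 k)" and R_bdd: "\<exists>r. \<forall>k. spec_norm (R1 k) \<le> r"
    and C1_rank: "rank C1 = CARD('n)"
    and M_prob: "prob_space M"
    and Xi_meas: "\<And>k. Xi k \<in> measurable M (count_space UNIV)"
    and gam_meas: "\<And>k. gam k \<in> measurable M (count_space UNIV)"
    and p_nonneg: "\<And>i j. 0 \<le> p i j" and p_stoch: "\<And>i. (\<Sum>j\<in>UNIV. p i j) = 1"
    and phi_prob: "\<And>j. 0 \<le> phi j \<and> phi j \<le> 1"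
    and joint_law: "\<And>n (s :: nat \<Rightarrow> 'b) (g :: nat \<Rightarrow> bool).
          measure M {\<omega> \<in> space M. \<forall>t\<le>n. Xi t \<omega> = s t \<and> gam t \<omega> = g t}
          = measure M {\<omega> \<in> space M. Xi 0 \<omega> = s 0}
            * (\<Prod>t<n. p (s t) (s (Suc t)))
            * (\<Prod>t\<le>n. if g t then phi (s t) else 1 - phi (s t))"
    and cond: "\<exists>\<rho>. 0 \<le> \<rho> \<and> \<rho> < 1 \<and>
          (\<forall>i. (spec_norm A)^2 * (\<Sum>j\<in>UNIV. p i j * (1 - phi j)) \<le> \<rho>)"
  shows "\<exists>\<alpha> \<beta> \<rho>'. 0 \<le> \<rho>' \<and> \<rho>' < 1 \<and>
          (\<forall>k. integral\<^sup>L M (\<lambda>\<omega>. trace (Ppred A C1 Q R1 P0 (\<lambda>t. gam t \<omega>) k))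
                 \<le> \<alpha> * \<rho>'^k + \<beta>)"
proof -
  interpret network_model M Xi gam p phi
    using M_prob Xi_meas gam_meas p_nonneg p_stoch phi_prob joint_law
    by (simp add: network_model_def network_model_axioms_def)
  obtain q r where q: "\<And>k. spec_norm (Q k) \<le> q" and r: "\<And>k. spec_norm (R1 k) \<le> r"
    using Q_bdd R_bdd by blast
  obtain L where L: "L ** C1 = mat 1"
    using C1_rank full_rank_injective matrix_left_invertible_injective by blast
  obtain \<rho>0 where "\<rho>0 < 1"
    and contraction: "\<And>i. (spec_norm A)^2 * (\<Sum>j\<in>UNIV. p i j * (1 - phi j)) \<le> \<rho>0"
    using cond by blast
  define \<rho> where "\<rho> = max \<rho>0 (1/2)"
  have "\<rho> < 1" "1/2 \<le> \<rho>" "\<And>i. (spec_norm A)^2 * (\<Sum>j\<in>UNIV. p i j * (1 - phi j)) \<le> \<rho>"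
    using \<open>\<rho>0 < 1\<close> contraction by (auto simp: \<rho>_def le_max_iff_disj)
  note bound =
    expected_trace_Ppred_le[where Q = Q and R = R1, OF P0_cov Q_cov q R_cov r L this(3,2,1)]
  show ?thesis
    using \<open>\<rho> < 1\<close> \<open>1/2 \<le> \<rho>\<close> bound
    by (intro exI[of _ "CARD('n) * (1 + 2 * (spec_norm A)^2) * spec_norm P0"] exI[of _ \<rho>]
        exI[of _ "CARD('n) * ((spec_norm A)^2 * (r * spec_norm L ^ 2) + q) / (1 - \<rho>)"])
       (auto simp: algebra_simps)
qed

end
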